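(* For every Parikh vector $P \in \mathbb{N}_0^{\sigma}$ with $n = \sum_{a\in\Sigma} P[a] \geq 1$, the diameter of the configuration graph $G(P)$ equals $n - \max_{a \in \Sigma} P[a]$.
   Context: Alphabet $\Sigma = [\sigma]$. For $P \in \mathbb{N}_0^\sigma$, $n := \sum_a P[a]$ and $\Sigma^{*|_P}$ is the set of words of length $n$ over $\Sigma$ in which each symbol $a$ occurs exactly $P[a]$ times. For a word $w$ and $i\neq j$ with $w[i]\neq w[j]$, the 2-swap $w\circ(i,j)$ exchanges the symbols at positions $i$ and $j$. The configuration graph $G(P)$ has vertex set $\Sigma^{*|_P}$ and an edge $\{w,u\}$ whenever $u = w\circ(i,j)$ for some 2-swap. $G(P)$ is connected; its diameter is the maximum over pairs of vertices of their shortest-path distance. *)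

theory Defs
  imports Main
begin

text \<open>Alphabet [sigma] is rendered as {0..<sigma}; a Parikh vector P is a list
  of length sigma, P ! a being the multiplicity of symbol a.\<close>

definition words_of :: "nat list \<Rightarrow> nat list set" where
  "words_of P = {w. length w = sum_list P \<and> set w \<subseteq> {..<length P}
                   \<and> (\<forall>a < length P. count_list w a = P ! a)}"

definition swap2 :: "nat list \<Rightarrow> nat \<Rightarrow> nat \<Rightarrow> nat list" where
  "swap2 w i j = w[i := w ! j, j := w ! i]"

definition swap_edge :: "nat list \<Rightarrow> nat list \<Rightarrow> bool" where
  "swap_edge w u \<longleftrightarrow> (\<exists>i j. i < length w \<and> j < length w \<and> i \<noteq> j
                          \<and> w ! i \<noteq> w ! j \<and> u = swap2 w i j)"

definition graph_dist :: "nat list \<Rightarrow> nat list \<Rightarrow> nat" where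
  "graph_dist w u = (LEAST k. (swap_edge ^^ k) w u)"

definition diameter :: "nat list \<Rightarrow> nat" where
  "diameter P = Max {graph_dist w u | w u. w \<in> words_of P \<and> u \<in> words_of P}"

end

theory Submission
  imports Defs "HOL-Library.Multiset" "HOL-Combinatorics.Transposition"
begin

text \<open>Let a be a most frequent letter, occurring m times. For the upper bound, turn w into u by
  repairing, one swap each, the positions where u does not carry a; this takes at most n - m
  swaps, and the positions of a are then correct automatically. For the lower bound, read a
  swap path from w to u backwards and maintain a partition of the positions such that every
  union of blocks carries the same letters in w and in u: it starts with n singletons and each
  swap merges at most two blocks, so a path of length k leaves at least n - k blocks. Now sort
  w with a last and let u be its rotation by m. Every letter other than a strictly increases
  in rank from w to u, so the letter of least rank in a block can only be matched inside the
  block if the block contains an a. Hence there are at most m blocks, and k \<ge> n - m.\<close>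

lemma count_list_card: "count_list xs x = card {i. i < length xs \<and> xs ! i = x}"
  by (simp add: count_list_eq_length_filter length_filter_conv_card eq_commute)

lemma length_swap2 [simp]: "length (swap2 w i j) = length w"
  by (simp add: swap2_def)

lemma nth_swap2:
  "i < length w \<Longrightarrow> j < length w \<Longrightarrow> t < length w \<Longrightarrow>
   swap2 w i j ! t = (if t = j then w ! i else if t = i then w ! j else w ! t)"
  by (simp add: swap2_def nth_list_update)

lemma mset_swap2: "i < length w \<Longrightarrow> j < length w \<Longrightarrow> mset (swap2 w i j) = mset w"
  unfolding swap2_def by (metis list_update_swap mset_swap)

lemma nth_swap2_transpose:
  "i < length w \<Longrightarrow> j < length w \<Longrightarrow> k < length w \<Longrightarrow>
   swap2 w i j ! k = w ! Transposition.transpose i j k"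
  by (simp add: nth_swap2 transpose_def)

lemma transpose_mem_iff: "(i \<in> A \<longleftrightarrow> j \<in> A) \<Longrightarrow> Transposition.transpose i j k \<in> A \<longleftrightarrow> k \<in> A"
  by (metis in_transpose_image_iff transpose_image_eq)

lemma card_positions_swap2:
  assumes "i < n" "j < n" "length v = n" "i \<in> K \<longleftrightarrow> j \<in> K"
  shows "card {k. k < n \<and> k \<in> K \<and> swap2 v i j ! k = x} = card {k. k < n \<and> k \<in> K \<and> v ! k = x}"
proof -
  let ?t = "Transposition.transpose i j"
  have "{k. k < n \<and> k \<in> K \<and> swap2 v i j ! k = x} = ?t ` {k. k < n \<and> k \<in> K \<and> v ! k = x}"
    using assms transpose_mem_iff[of i "{..<n}" j] transpose_mem_iff[of i K j]
    by (intro set_eqI) (auto simp: in_transpose_image_iff nth_swap2_transpose)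
  then show ?thesis by (simp only: card_image[OF inj_on_transpose])
qed

lemma swap_edge_length: "swap_edge w u \<Longrightarrow> length u = length w"
  unfolding swap_edge_def by auto

lemma relpowp_swap_edge_length: "(swap_edge ^^ k) v u \<Longrightarrow> length u = length v"
proof (induction k arbitrary: v)
  case (Suc k)
  then obtain y where "swap_edge v y" "(swap_edge ^^ k) y u"
    by (blast elim: relpowp_Suc_E2)
  with Suc.IH show ?case by (simp add: swap_edge_length)
qed simp

subsection \<open>Upper bound\<close>

lemma mset_eq_exists_mismatch:
  assumes "mset v = mset u" "i < length u" "u ! i = b" "v ! i \<noteq> b"
  shows "\<exists>j<length u. v ! j = b \<and> u ! j \<noteq> b"
proof (rule ccontr)
  assume "\<not> ?thesis"
  then have "{j. j < length u \<and> v ! j = b} \<subseteq> {j. j < length u \<and> u ! j = b}"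
    by blast
  moreover have "i \<in> {j. j < length u \<and> u ! j = b} - {j. j < length u \<and> v ! j = b}"
    using assms(2-4) by simp
  ultimately have "card {j. j < length u \<and> v ! j = b} < card {j. j < length u \<and> u ! j = b}"
    by (intro psubset_card_mono) auto
  moreover have "length v = length u"
    using mset_eq_length[OF assms(1)] .
  ultimately have "count_list v b < count_list u b"
    by (simp add: count_list_card)
  with mset_eq_length_filter[OF assms(1)] show False
    by simp
qed

lemma mset_eq_if_agree_off_letter:
  assumes "mset v = mset u" and agree: "\<forall>i<length u. u ! i \<noteq> a \<longrightarrow> v ! i = u ! i"
  shows "v = u"
proof (rule nth_equalityI)
  show len: "length v = length u"
    using mset_eq_length[OF assms(1)] .
  fix i assume "i < length v"
  show "v ! i = u ! i"
  proof (rule ccontr)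
    assume ne: "v ! i \<noteq> u ! i"
    with agree \<open>i < length v\<close> len have "u ! i = a" by auto
    obtain j where "j < length v" "u ! j = v ! i" "v ! j \<noteq> v ! i"
      using mset_eq_exists_mismatch[of u v i "v ! i"] assms(1) \<open>i < length v\<close> ne by auto
    with agree len ne \<open>u ! i = a\<close> show False by auto
  qed
qed

text \<open>Each swap puts the letter u!i into a position i with u!i \<noteq> a, taking it from a position
  j that is itself wrong, so the set of wrong positions outside the a's strictly shrinks.\<close>
lemma swap_path_within_mismatches:
  "mset v = mset u \<Longrightarrow>
   \<exists>k \<le> card {i. i < length u \<and> u ! i \<noteq> a \<and> v ! i \<noteq> u ! i}. (swap_edge ^^ k) v u"
proof (induction "card {i. i < length u \<and> u ! i \<noteq> a \<and> v ! i \<noteq> u ! i}"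
    arbitrary: v rule: less_induct)
  case less
  define H where "H v = {i. i < length u \<and> u ! i \<noteq> a \<and> v ! i \<noteq> u ! i}" for v
  have len: "length v = length u"
    using mset_eq_length[OF less.prems] .
  show ?case
  proof (cases "H v = {}")
    case True
    then have "v = u"
      using mset_eq_if_agree_off_letter[OF less.prems] unfolding H_def by blast
    then show ?thesis by auto
  next
    case False
    then obtain i where i: "i < length u" "u ! i \<noteq> a" "v ! i \<noteq> u ! i"
      unfolding H_def by auto
    obtain j where j: "j < length u" "v ! j = u ! i" "u ! j \<noteq> u ! i"
      using mset_eq_exists_mismatch[OF less.prems i(1) refl i(3)] by auto
    define v' where "v' = swap2 v i j"
    have "swap_edge v v'"
      unfolding swap_edge_def v'_def using i j len by metis
    have mset': "mset v' = mset u"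
      using less.prems i j len by (simp add: v'_def mset_swap2)
    have "H v' \<subseteq> H v - {i}"
      unfolding H_def v'_def using i j len by (auto simp: nth_swap2 split: if_splits)
    with i have "H v' \<subset> H v" unfolding H_def by auto
    then have lt: "card (H v') < card (H v)"
      unfolding H_def by (simp add: psubset_card_mono)
    obtain k where k: "k \<le> card (H v')" "(swap_edge ^^ k) v' u"
      using less.hyps[OF lt[unfolded H_def] mset'] unfolding H_def by auto
    have "(swap_edge ^^ Suc k) v u"
      using \<open>swap_edge v v'\<close> k(2) by (rule relpowp_Suc_I2)
    moreover have "Suc k \<le> card (H v)" using k lt by simp
    ultimately show ?thesis unfolding H_def by blast
  qed
qed

lemma swap_path_le_count:
  assumes "mset v = mset u"
  obtains k where "k \<le> length u - count_list u a" "(swap_edge ^^ k) v u"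
proof -
  obtain k where k: "k \<le> card {i. i < length u \<and> u ! i \<noteq> a \<and> v ! i \<noteq> u ! i}"
    "(swap_edge ^^ k) v u"
    using swap_path_within_mismatches[OF assms] by blast
  have "card {i. i < length u \<and> u ! i \<noteq> a \<and> v ! i \<noteq> u ! i}
      \<le> card ({..<length u} - {i. i < length u \<and> u ! i = a})"
    by (intro card_mono) auto
  also have "\<dots> = length u - count_list u a"
    by (subst card_Diff_subset) (auto simp: count_list_card)
  finally show ?thesis
    using k that by (meson le_trans)
qed

lemma count_list_replicate: "count_list (replicate n x) y = (if y = x then n else 0)"
  by (induction n) auto

lemma count_list_replicate_blocks:
  "distinct bs \<Longrightarrow>
   count_list (concat (map (\<lambda>b. replicate (P ! b) b) bs)) x = (if x \<in> set bs then P ! x else 0)"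
  by (induction bs) (auto simp: count_list_replicate)

lemma replicate_blocks_in_words_of:
  "concat (map (\<lambda>b. replicate (P ! b) b) [0..<length P]) \<in> words_of P"
  unfolding words_of_def
  by (auto simp: count_list_replicate_blocks length_concat sum_list_sum_nth comp_def
      atLeast0LessThan)

lemma count_list_words_of:
  "w \<in> words_of P \<Longrightarrow> count_list w x = (if x < length P then P ! x else 0)"
  unfolding words_of_def by (auto simp: count_list_0_iff)

lemma words_of_mset_eq: "w \<in> words_of P \<Longrightarrow> u \<in> words_of P \<Longrightarrow> mset w = mset u"
  by (simp add: multiset_eq_iff count_mset count_list_words_of)

lemma mset_rotate: "mset (rotate n xs) = mset xs"
  by (metis rotate_drop_take append_take_drop_id mset_append union_commute)

lemma mset_in_words_of: "w \<in> words_of P \<Longrightarrow> mset v = mset w \<Longrightarrow> v \<in> words_of P"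
  unfolding words_of_def by (auto simp flip: count_mset set_mset_mset size_mset)

lemma graph_dist_le:
  assumes "w \<in> words_of P" "u \<in> words_of P" "a < length P"
  shows "graph_dist w u \<le> sum_list P - P ! a"
proof -
  obtain k where "k \<le> length u - count_list u a" "(swap_edge ^^ k) w u"
    using swap_path_le_count words_of_mset_eq[OF assms(1,2)] by blast
  moreover have "length u - count_list u a = sum_list P - P ! a"
    using assms(2,3) unfolding words_of_def by simp
  moreover from \<open>(swap_edge ^^ k) w u\<close> have "graph_dist w u \<le> k"
    unfolding graph_dist_def by (rule Least_le)
  ultimately show ?thesis by simp
qed

subsection \<open>Lower bound\<close>

text \<open>The blocks are the fibres of f over the positions below n.\<close>
definition blocks_balanced :: "nat \<Rightarrow> 'a list \<Rightarrow> 'a list \<Rightarrow> (nat \<Rightarrow> nat) \<Rightarrow> bool" where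
  "blocks_balanced n v u f \<longleftrightarrow>
    (\<forall>C x. card {k. k < n \<and> f k \<in> C \<and> v ! k = x} = card {k. k < n \<and> f k \<in> C \<and> u ! k = x})"

lemma card_image_merge:
  assumes "finite A"
  shows "card (f ` A) \<le> card ((\<lambda>k. if f k = c then d else f k) ` A) + 1"
proof -
  have "f ` A - {c} \<subseteq> (\<lambda>k. if f k = c then d else f k) ` A"
    by (auto intro: image_eqI)
  then have "card (f ` A - {c}) \<le> card ((\<lambda>k. if f k = c then d else f k) ` A)"
    using assms by (intro card_mono) auto
  moreover have "card (f ` A) \<le> card (f ` A - {c}) + 1"
    using assms by (cases "c \<in> f ` A") (simp_all add: card_Diff_singleton_if card_gt_0_iff)
  ultimately show ?thesis by linarith
qed

lemma blocks_balanced_swap2: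
  assumes bal: "blocks_balanced n (swap2 v i j) u f" and ij: "i < n" "j < n" "length v = n"
  shows "blocks_balanced n v u (\<lambda>k. if f k = f j then f i else f k)"
  unfolding blocks_balanced_def
proof (intro allI)
  fix C x
  define g where "g k = (if f k = f j then f i else f k)" for k
  define C' where "C' = (if f i \<in> C then insert (f j) C else C - {f j})"
  have g: "g k \<in> C \<longleftrightarrow> f k \<in> C'" for k
    unfolding g_def C'_def by auto
  have "card {k. k < n \<and> g k \<in> C \<and> v ! k = x} = card {k. k < n \<and> k \<in> f -` C' \<and> v ! k = x}"
    by (simp add: g)
  also have "\<dots> = card {k. k < n \<and> k \<in> f -` C' \<and> swap2 v i j ! k = x}"
    using ij by (intro card_positions_swap2[symmetric]) (auto simp: C'_def)
  also have "\<dots> = card {k. k < n \<and> f k \<in> C' \<and> u ! k = x}"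
    using bal unfolding blocks_balanced_def by simp
  also have "\<dots> = card {k. k < n \<and> g k \<in> C \<and> u ! k = x}"
    by (simp add: g)
  finally show "card {k. k < n \<and> (if f k = f j then f i else f k) \<in> C \<and> v ! k = x}
      = card {k. k < n \<and> (if f k = f j then f i else f k) \<in> C \<and> u ! k = x}"
    unfolding g_def .
qed

lemma swap_path_blocks:
  "(swap_edge ^^ k) v u \<Longrightarrow>
   \<exists>f. blocks_balanced (length u) v u f \<and> length u \<le> card (f ` {..<length u}) + k"
proof (induction k arbitrary: v)
  case 0
  then show ?case
    unfolding blocks_balanced_def by (intro exI[of _ id]) simp
next
  case (Suc k)
  then obtain y where "swap_edge v y" "(swap_edge ^^ k) y u"
    by (blast elim: relpowp_Suc_E2)
  then obtain f where f: "blocks_balanced (length u) y u f" "length u \<le> card (f ` {..<length u}) + k"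
    using Suc.IH by blast
  obtain i j where ij: "i < length v" "j < length v" "y = swap2 v i j"
    using \<open>swap_edge v y\<close> unfolding swap_edge_def by blast
  have len: "length v = length u"
    using relpowp_swap_edge_length[OF \<open>(swap_edge ^^ k) y u\<close>] ij by simp
  have "blocks_balanced (length u) (swap2 v i j) u f"
    using f(1) ij(3) by simp
  with ij(1,2) len have "blocks_balanced (length u) v u (\<lambda>k. if f k = f j then f i else f k)"
    by (intro blocks_balanced_swap2) simp_all
  moreover have "card (f ` {..<length u})
      \<le> card ((\<lambda>k. if f k = f j then f i else f k) ` {..<length u}) + 1"
    by (rule card_image_merge) simp
  ultimately show ?case
    using f(2) by (intro exI[of _ "\<lambda>k. if f k = f j then f i else f k"]) simp
qed

text \<open>The letter of least rank in the block of k0 must occur in u inside the block, at a position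
  where w has a letter of no larger rank; by the rank hypothesis that letter is a.\<close>
lemma block_contains_letter:
  assumes bal: "blocks_balanced n w u f"
    and rank: "\<forall>k<n. w ! k \<noteq> a \<longrightarrow> r (w ! k) < (r (u ! k) :: nat)"
    and "k0 < n"
  shows "\<exists>k<n. f k = f k0 \<and> w ! k = a"
proof (rule ccontr)
  assume no_a: "\<not> ?thesis"
  obtain k1 where k1: "k1 < n" "f k1 = f k0"
    and least: "\<And>k. k < n \<Longrightarrow> f k = f k0 \<Longrightarrow> r (w ! k1) \<le> r (w ! k)"
    using ex_has_least_nat[of "\<lambda>k. k < n \<and> f k = f k0" k0 "\<lambda>k. r (w ! k)"] \<open>k0 < n\<close> by blast
  have "0 < card {k. k < n \<and> f k \<in> {f k0} \<and> w ! k = w ! k1}"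
    using k1 by (auto simp: card_gt_0_iff)
  also have "\<dots> = card {k. k < n \<and> f k \<in> {f k0} \<and> u ! k = w ! k1}"
    using bal unfolding blocks_balanced_def by blast
  finally obtain k where k: "k < n" "f k = f k0" "u ! k = w ! k1"
    by (auto simp: card_gt_0_iff)
  with no_a rank have "r (w ! k) < r (w ! k1)" by auto
  with least k show False by fastforce
qed

lemma card_blocks_le_count:
  assumes bal: "blocks_balanced n w u f" and "length w = n"
    and rank: "\<forall>k<n. w ! k \<noteq> a \<longrightarrow> r (w ! k) < (r (u ! k) :: nat)"
  shows "card (f ` {..<n}) \<le> count_list w a"
proof -
  have "f ` {..<n} \<subseteq> f ` {k. k < n \<and> w ! k = a}"
  proof (intro subsetI)
    fix c assume "c \<in> f ` {..<n}"
    then obtain k0 where "k0 < n" "c = f k0" by auto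
    then obtain k where "k < n" "f k = c" "w ! k = a"
      using block_contains_letter[OF bal rank] by metis
    then show "c \<in> f ` {k. k < n \<and> w ! k = a}"
      by (auto intro!: rev_image_eqI)
  qed
  then have "card (f ` {..<n}) \<le> card (f ` {k. k < n \<and> w ! k = a})"
    by (intro card_mono) auto
  also have "\<dots> \<le> card {k. k < n \<and> w ! k = a}"
    by (rule card_image_le) simp
  finally show ?thesis
    using \<open>length w = n\<close> by (simp add: count_list_card)
qed

lemma swap_path_length_ge:
  assumes path: "(swap_edge ^^ k) w u"
    and rank: "\<forall>i<length w. w ! i \<noteq> a \<longrightarrow> r (w ! i) < (r (u ! i) :: nat)"
  shows "length w - count_list w a \<le> k"
proof -
  have len: "length u = length w"
    using relpowp_swap_edge_length[OF path] .
  obtain f where "blocks_balanced (length u) w u f" "length u \<le> card (f ` {..<length u}) + k"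
    using swap_path_blocks[OF path] by blast
  with card_blocks_le_count[of "length w" w u f a r] len rank show ?thesis
    by simp
qed

subsection \<open>A pair at maximal distance\<close>

lemma sorted_key_last_occurrences:
  fixes r :: "'a \<Rightarrow> 'b::linorder"
  assumes sorted: "sorted (map r w)" and top: "\<forall>x\<in>set w. x \<noteq> a \<longrightarrow> r x < r a"
    and k: "length w - count_list w a \<le> k" "k < length w"
  shows "w ! k = a"
proof (rule ccontr)
  assume "w ! k \<noteq> a"
  with top k(2) have "r (w ! k) < r a" by simp
  have "{t. t < length w \<and> w ! t = a} \<subseteq> {k<..<length w}"
  proof (intro subsetI)
    fix t assume t: "t \<in> {t. t < length w \<and> w ! t = a}"
    have "\<not> t \<le> k"
    proof
      assume "t \<le> k"
      with sorted k(2) have "r (w ! t) \<le> r (w ! k)" by (simp add: sorted_iff_nth_mono)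
      with t \<open>r (w ! k) < r a\<close> show False by simp
    qed
    with t show "t \<in> {k<..<length w}" by simp
  qed
  then have "count_list w a \<le> card {k<..<length w}"
    unfolding count_list_card by (intro card_mono) auto
  then have "count_list w a \<le> length w - Suc k" by simp
  with k show False by linarith
qed

lemma sorted_key_shift_less:
  fixes r :: "'a \<Rightarrow> 'b::linorder"
  assumes sorted: "sorted (map r w)" and inj: "inj_on r (set w)"
    and count: "\<forall>x. count_list w x \<le> m" and km: "k + m < length w"
  shows "r (w ! k) < r (w ! (k + m))"
proof (rule ccontr)
  assume "\<not> ?thesis"
  then have le: "r (w ! (k + m)) \<le> r (w ! k)" by simp
  have mono: "i \<le> j \<Longrightarrow> j < length w \<Longrightarrow> r (w ! i) \<le> r (w ! j)" for i j
    using sorted by (simp add: sorted_iff_nth_mono)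
  have "{k..k + m} \<subseteq> {t. t < length w \<and> w ! t = w ! k}"
  proof (intro subsetI)
    fix t assume t: "t \<in> {k..k + m}"
    with mono km have "r (w ! k) \<le> r (w ! t)" "r (w ! t) \<le> r (w ! (k + m))"
      by auto
    with le have "r (w ! t) = r (w ! k)" by simp
    with inj t km show "t \<in> {t. t < length w \<and> w ! t = w ! k}"
      by (auto dest: inj_onD)
  qed
  then have "card {k..k + m} \<le> count_list w (w ! k)"
    unfolding count_list_card by (intro card_mono) auto
  with count[rule_format, of "w ! k"] show False by simp
qed

text \<open>Sorting with a last and rotating by the multiplicity m of a shifts every position by m;
  as no letter occurs more than m times, this raises the rank of every letter except the final a's.\<close>
lemma sorted_key_rotate_less:
  fixes r :: "'a \<Rightarrow> 'b::linorder"
  assumes sorted: "sorted (map r w)" and inj: "inj_on r (set w)"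
    and top: "\<forall>x\<in>set w. x \<noteq> a \<longrightarrow> r x < r a"
    and count: "\<forall>x. count_list w x \<le> count_list w a"
    and k: "k < length w" "w ! k \<noteq> a"
  shows "r (w ! k) < r (rotate (count_list w a) w ! k)"
proof -
  have km: "k + count_list w a < length w"
    using sorted_key_last_occurrences[OF sorted top _ k(1)] k by linarith
  then have "rotate (count_list w a) w ! k = w ! (k + count_list w a)"
    by (simp add: nth_rotate k(1) add.commute)
  with sorted_key_shift_less[OF sorted inj count km] show ?thesis by simp
qed

lemma exists_rank_increasing_pair:
  assumes a: "a < length P" "P ! a = Max (set P)"
  obtains w u and r :: "nat \<Rightarrow> nat" where "w \<in> words_of P" "u \<in> words_of P"
    "\<forall>k<length w. w ! k \<noteq> a \<longrightarrow> r (w ! k) < r (u ! k)"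
proof -
  define r where "r x = (if x = a then length P else x)" for x
  define w where "w = sort_key r (concat (map (\<lambda>b. replicate (P ! b) b) [0..<length P]))"
  have w: "w \<in> words_of P"
    unfolding w_def by (rule mset_in_words_of[OF replicate_blocks_in_words_of]) simp
  have u: "rotate (count_list w a) w \<in> words_of P"
    by (rule mset_in_words_of[OF w]) (simp add: mset_rotate)
  have "set w \<subseteq> {..<length P}"
    using w unfolding words_of_def by simp
  moreover have "inj_on r {..<length P}"
    unfolding r_def inj_on_def by auto
  ultimately have inj: "inj_on r (set w)"
    by (rule inj_on_subset[rotated])
  have top: "\<forall>x\<in>set w. x \<noteq> a \<longrightarrow> r x < r a"
    using \<open>set w \<subseteq> {..<length P}\<close> unfolding r_def by auto
  have count: "\<forall>x. count_list w x \<le> count_list w a"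
    using a by (simp add: count_list_words_of[OF w])
  have "sorted (map r w)"
    unfolding w_def by simp
  with inj top count have "\<forall>k<length w. w ! k \<noteq> a \<longrightarrow> r (w ! k) < r (rotate (count_list w a) w ! k)"
    by (blast intro: sorted_key_rotate_less)
  with w u show ?thesis by (rule that)
qed

lemma diameter_eqI:
  assumes le: "\<And>v v'. v \<in> words_of P \<Longrightarrow> v' \<in> words_of P \<Longrightarrow> graph_dist v v' \<le> d"
    and "w \<in> words_of P" "u \<in> words_of P" "graph_dist w u = d"
  shows "diameter P = d"
  unfolding diameter_def
proof (rule Max_eqI)
  show "finite {graph_dist v v' |v v'. v \<in> words_of P \<and> v' \<in> words_of P}"
    by (rule finite_subset[of _ "{..d}"]) (auto dest: le)
qed (use assms in auto)

theorem theorem1: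
  fixes P :: "nat list"
  assumes "sum_list P \<ge> 1"
  shows "diameter P = sum_list P - Max (set P)"
proof -
  have "P \<noteq> []" using assms by auto
  then have "Max (set P) \<in> set P" by simp
  then obtain a where a: "a < length P" "P ! a = Max (set P)"
    by (metis in_set_conv_nth)
  obtain w u and r :: "nat \<Rightarrow> nat" where wu: "w \<in> words_of P" "u \<in> words_of P"
    and rank: "\<forall>k<length w. w ! k \<noteq> a \<longrightarrow> r (w ! k) < r (u ! k)"
    using exists_rank_increasing_pair[OF a] .
  obtain k where "(swap_edge ^^ k) w u"
    using swap_path_le_count words_of_mset_eq[OF wu] by blast
  then have "(swap_edge ^^ graph_dist w u) w u"
    unfolding graph_dist_def by (rule LeastI)
  from swap_path_length_ge[OF this rank]
  have lower: "sum_list P - P ! a \<le> graph_dist w u"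
    using wu(1) a(1) by (simp add: count_list_words_of) (simp add: words_of_def)
  have upper: "graph_dist v v' \<le> sum_list P - P ! a"
    if "v \<in> words_of P" "v' \<in> words_of P" for v v'
    using graph_dist_le[OF that a(1)] .
  with lower wu have "graph_dist w u = sum_list P - P ! a"
    by (simp add: le_antisym)
  with upper wu have "diameter P = sum_list P - P ! a"
    by (rule diameter_eqI)
  with a show ?thesis by simp
qed

end
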